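(* Let $L$ be an $n\times n$ nonsingular M-matrix with integer entries. Every equivalence class of $\mathbb{Z}^n$ under $\sim$ contains exactly one $z$-superstable configuration.
   Context: A Z-matrix is a square real matrix whose off-diagonal entries are all $\le 0$. A nonsingular M-matrix is a Z-matrix $L$ that is invertible with $L^{-1}$ having all entries nonnegative. Vector inequalities are entrywise. For $f,g\in\mathbb{Z}^n$, $f\sim g$ means $g-f=Lz$ for some $z\in\mathbb{Z}^n$. A vector $f\in\mathbb{Z}^n$ with $f\ge 0$ is $z$-superstable with respect to $L$ if for every $z\in\mathbb{Z}^n$ with $z\ge0$ and $z\ne0$ there exists $i$ with $f_i-(Lz)_i<0$. *)

theory Defs
  imports "HOL-Analysis.Analysis"
begin

text \<open>Integer n x n matrices are int^'n^'n, with 'n a finite index type (n = CARD('n)).\<close>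

definition real_mat :: "int^'n^'m \<Rightarrow> real^'n^'m" where
  "real_mat L = (\<chi> i j. real_of_int (L $ i $ j))"

definition Z_matrix :: "('a::{ord,zero})^'n^'n \<Rightarrow> bool" where
  "Z_matrix L \<longleftrightarrow> (\<forall>i j. i \<noteq> j \<longrightarrow> L $ i $ j \<le> 0)"

definition nonsingular_M_matrix :: "int^'n^'n \<Rightarrow> bool" where
  "nonsingular_M_matrix L \<longleftrightarrow> Z_matrix L \<and> invertible (real_mat L) \<and>
     (\<forall>i j. matrix_inv (real_mat L) $ i $ j \<ge> 0)"

definition lat_equiv :: "int^'n^'n \<Rightarrow> int^'n \<Rightarrow> int^'n \<Rightarrow> bool" where
  "lat_equiv L f g \<longleftrightarrow> (\<exists>z::int^'n. g - f = L *v z)"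

definition z_superstable :: "int^'n^'n \<Rightarrow> int^'n \<Rightarrow> bool" where
  "z_superstable L f \<longleftrightarrow> (\<forall>i. f $ i \<ge> 0) \<and>
     (\<forall>z::int^'n. (\<forall>i. z $ i \<ge> 0) \<and> z \<noteq> 0 \<longrightarrow> (\<exists>i. f $ i - (L *v z) $ i < 0))"

end

theory Submission
  imports Defs
begin

text \<open>Uniqueness: if \<open>f' - f = L (p - q)\<close> with \<open>p, q \<ge> 0\<close> of disjoint support, the sign
  pattern of a Z-matrix makes \<open>f - L q = f' - L p\<close> nonnegative, so superstability of \<open>f\<close> and
  \<open>f'\<close> forces \<open>q = 0\<close> and \<open>p = 0\<close>.
  Existence: invertibility yields an integer \<open>y\<close> with \<open>L y \<ge> 1\<close>, so adding a large multiple of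
  \<open>L y\<close> moves \<open>g\<close> to some \<open>f\<^sub>0 \<ge> 0\<close> in its class. Since \<open>L\<^sup>-\<^sup>1 \<ge> 0\<close>, every \<open>z\<close> with
  \<open>L z \<le> f\<^sub>0\<close> satisfies \<open>z \<le> L\<^sup>-\<^sup>1 f\<^sub>0\<close>, so among the \<open>z \<ge> 0\<close> with \<open>L z \<le> f\<^sub>0\<close> one has
  maximal coordinate sum, and \<open>f\<^sub>0 - L z\<close> is z-superstable by that maximality.\<close>

lemma invertible_matrix_inv:
  fixes A :: "'a::semiring_1^'n^'m"
  assumes "invertible A"
  shows "A ** matrix_inv A = mat 1 \<and> matrix_inv A ** A = mat 1"
  using assms unfolding invertible_def matrix_inv_def by (rule someI_ex)

definition real_vec :: "int^'n \<Rightarrow> real^'n" where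
  "real_vec v = (\<chi> i. real_of_int (v $ i))"

lemma real_mat_mult_real_vec: "real_mat L *v real_vec z = real_vec (L *v z)"
  by (simp add: vec_eq_iff matrix_vector_mult_def real_mat_def real_vec_def)

lemma lat_equiv_sym: "lat_equiv L f g \<Longrightarrow> lat_equiv L g f"
proof -
  assume "lat_equiv L f g"
  then obtain z where "g - f = L *v z" unfolding lat_equiv_def by blast
  then have "f - g = - (L *v z)" by (metis minus_diff_eq)
  also have "\<dots> = L *v (- z)" using matrix_vector_mult_diff_distrib[of L 0 z] by simp
  finally show ?thesis unfolding lat_equiv_def by blast
qed

lemma lat_equiv_trans: "lat_equiv L f g \<Longrightarrow> lat_equiv L g h \<Longrightarrow> lat_equiv L f h"
proof -
  assume "lat_equiv L f g" "lat_equiv L g h"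
  then obtain y z where "g - f = L *v y" "h - g = L *v z" unfolding lat_equiv_def by blast
  then have "h - f = L *v (y + z)" by (simp add: matrix_vector_right_distrib algebra_simps)
  then show ?thesis unfolding lat_equiv_def by blast
qed

lemma lat_equiv_diff_image: "lat_equiv L f (f - L *v z)"
proof -
  have "(f - L *v z) - f = L *v (- z)"
    using matrix_vector_mult_diff_distrib[of L 0 z] by simp
  then show ?thesis unfolding lat_equiv_def by blast
qed

lemma Z_matrix_mult_nonneg_nonpos:
  fixes L :: "'a::linordered_idom^'n^'n"
  assumes "Z_matrix L" and "\<forall>j. v $ j \<ge> 0" and "v $ i = 0"
  shows "(L *v v) $ i \<le> 0"
  unfolding matrix_vector_mult_def vec_lambda_beta
proof (rule sum_nonpos)
  fix j
  show "L $ i $ j * v $ j \<le> 0"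
  proof (cases "j = i")
    case False
    then have "L $ i $ j \<le> 0" using \<open>Z_matrix L\<close> by (simp add: Z_matrix_def)
    then show ?thesis using assms(2) by (simp add: mult_nonpos_nonneg)
  qed (use assms(3) in simp)
qed

lemma z_superstable_unique:
  fixes L :: "int^'n^'n"
  assumes Z: "Z_matrix L" and f: "z_superstable L f" and f': "z_superstable L f'"
    and "lat_equiv L f f'"
  shows "f = f'"
proof -
  obtain z where z: "f' - f = L *v z" using \<open>lat_equiv L f f'\<close> unfolding lat_equiv_def by blast
  define p where "p = (\<chi> i. max (z $ i) 0)"
  define q where "q = (\<chi> i. max (- z $ i) 0)"
  have p0: "\<forall>j. p $ j \<ge> 0" and q0: "\<forall>j. q $ j \<ge> 0" by (simp_all add: p_def q_def)
  have disjoint: "p $ i = 0 \<or> q $ i = 0" for i by (simp add: p_def q_def max_def)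
  have "z = p - q" by (simp add: p_def q_def vec_eq_iff max_def)
  then have "f' = f + L *v (p - q)" using z by (metis add.commute diff_add_cancel)
  then have "f' = f + L *v p - L *v q" by (simp add: matrix_vector_mult_diff_distrib)
  then have balance: "f $ i - (L *v q) $ i = f' $ i - (L *v p) $ i" for i by simp
  have f_nonneg: "f $ i \<ge> 0" and f'_nonneg: "f' $ i \<ge> 0" for i
    using f f' unfolding z_superstable_def by blast+
  have nonneg: "f $ i - (L *v q) $ i \<ge> 0" for i
    using disjoint[of i] Z_matrix_mult_nonneg_nonpos[OF Z q0, of i]
      Z_matrix_mult_nonneg_nonpos[OF Z p0, of i] balance[of i] f_nonneg[of i] f'_nonneg[of i]
    by (cases "q $ i = 0") auto
  have "q = 0"
  proof (rule ccontr)
    assume "q \<noteq> 0"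
    then obtain i where "f $ i - (L *v q) $ i < 0" using f q0 unfolding z_superstable_def by blast
    with nonneg[of i] show False by simp
  qed
  moreover have "p = 0"
  proof (rule ccontr)
    assume "p \<noteq> 0"
    then obtain i where "f' $ i - (L *v p) $ i < 0" using f' p0 unfolding z_superstable_def by blast
    with nonneg[of i] balance[of i] show False by simp
  qed
  ultimately show ?thesis using \<open>z = p - q\<close> z by simp
qed

lemma exists_mult_ge_one:
  fixes L :: "int^'n^'n"
  assumes "invertible (real_mat L)"
  shows "\<exists>y. \<forall>i. (L *v y) $ i \<ge> 1"
proof -
  define R where "R = real_mat L"
  define x where "x = matrix_inv R *v vec 1"
  have Rx: "R *v x = vec 1"
    using invertible_matrix_inv[OF assms] by (simp add: x_def R_def matrix_vector_mul_assoc)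
  \<comment> \<open>Rounding \<open>c x\<close> up perturbs row \<open>i\<close> of \<open>R (c x) = c\<close> by at most \<open>\<Sum>\<^sub>j \<bar>R\<^sub>i\<^sub>j\<bar> \<le> c - 1\<close>.\<close>
  define c where "c = 1 + (\<Sum>i\<in>UNIV. \<Sum>j\<in>UNIV. \<bar>R $ i $ j\<bar>)"
  define y where "y = (\<chi> j. \<lceil>c * x $ j\<rceil>)"
  have "(L *v y) $ i \<ge> 1" for i
  proof -
    define e where "e j = real_of_int (y $ j) - c * x $ j" for j
    have e: "0 \<le> e j \<and> e j \<le> 1" for j
      unfolding e_def y_def by simp linarith
    have row_bound: "(\<Sum>j\<in>UNIV. \<bar>R $ i $ j\<bar>) \<le> c - 1"
      unfolding c_def by (auto intro: member_le_sum sum_nonneg)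
    have "real_of_int ((L *v y) $ i) = (\<Sum>j\<in>UNIV. R $ i $ j * real_of_int (y $ j))"
      by (simp add: matrix_vector_mult_def R_def real_mat_def)
    also have "\<dots> = c * (\<Sum>j\<in>UNIV. R $ i $ j * x $ j) + (\<Sum>j\<in>UNIV. R $ i $ j * e j)"
      by (simp add: e_def sum_distrib_left sum.distrib[symmetric] algebra_simps)
    also have "(\<Sum>j\<in>UNIV. R $ i $ j * x $ j) = 1"
      using Rx by (simp add: vec_eq_iff matrix_vector_mult_def)
    also have "(\<Sum>j\<in>UNIV. R $ i $ j * e j) \<ge> - (\<Sum>j\<in>UNIV. \<bar>R $ i $ j\<bar>)"
      unfolding sum_negf[symmetric]
    proof (rule sum_mono)
      fix j
      have "\<bar>R $ i $ j * e j\<bar> \<le> \<bar>R $ i $ j\<bar>"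
        using e[of j] by (simp add: abs_mult mult_left_le)
      then show "- \<bar>R $ i $ j\<bar> \<le> R $ i $ j * e j" by linarith
    qed
    ultimately have "real_of_int ((L *v y) $ i) \<ge> 1"
      using row_bound by linarith
    then show ?thesis by simp
  qed
  then show ?thesis by blast
qed

lemma exists_nonneg_lat_equiv:
  fixes L :: "int^'n^'n"
  assumes "invertible (real_mat L)"
  shows "\<exists>f. lat_equiv L g f \<and> (\<forall>i. f $ i \<ge> 0)"
proof -
  obtain y where y: "\<forall>i. (L *v y) $ i \<ge> 1" using exists_mult_ge_one[OF assms] by blast
  define k where "k = (\<Sum>i\<in>UNIV. \<bar>g $ i\<bar>)"
  have "g $ i + k * (L *v y) $ i \<ge> 0" for i
  proof -
    have "\<bar>g $ i\<bar> \<le> k" unfolding k_def by (rule member_le_sum) auto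
    moreover have "k * 1 \<le> k * (L *v y) $ i"
      using y \<open>\<bar>g $ i\<bar> \<le> k\<close> by (intro mult_left_mono) auto
    ultimately show ?thesis by linarith
  qed
  moreover have "L *v (k *s y) = k *s (L *v y)"
    by (simp add: vec_eq_iff matrix_vector_mult_def sum_distrib_left mult.left_commute)
  then have "lat_equiv L g (g + k *s (L *v y))"
    unfolding lat_equiv_def by (metis add_diff_cancel_left')
  ultimately show ?thesis by auto
qed

lemma real_le_inverse_mult_if_mult_le:
  fixes L :: "int^'n^'n"
  assumes "invertible (real_mat L)" and inv_nonneg: "\<forall>i j. matrix_inv (real_mat L) $ i $ j \<ge> 0"
    and le: "\<forall>i. (L *v z) $ i \<le> f $ i"
  shows "real_of_int (z $ i) \<le> (matrix_inv (real_mat L) *v real_vec f) $ i"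
proof -
  define Ri where "Ri = matrix_inv (real_mat L)"
  have "real_vec z = Ri *v (real_mat L *v real_vec z)"
    using invertible_matrix_inv[OF assms(1)] by (simp add: Ri_def matrix_vector_mul_assoc)
  then have "real_of_int (z $ i) = (Ri *v real_vec (L *v z)) $ i"
    by (metis real_mat_mult_real_vec real_vec_def vec_lambda_beta)
  also have "\<dots> \<le> (Ri *v real_vec f) $ i"
    using inv_nonneg le unfolding matrix_vector_mult_def[of Ri]
    by (auto simp: Ri_def real_vec_def intro!: sum_mono mult_left_mono)
  finally show ?thesis by (simp add: Ri_def)
qed

lemma z_superstable_if_max_sum:
  fixes L :: "int^'n^'n"
  assumes z_nonneg: "\<forall>i. z $ i \<ge> 0" and z_le: "\<forall>i. (L *v z) $ i \<le> f $ i"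
    and max: "\<And>z'. \<forall>i. z' $ i \<ge> 0 \<Longrightarrow> \<forall>i. (L *v z') $ i \<le> f $ i \<Longrightarrow>
                 sum (($) z') UNIV \<le> sum (($) z) UNIV"
  shows "z_superstable L (f - L *v z)"
  unfolding z_superstable_def
proof (intro conjI allI impI)
  show "(f - L *v z) $ i \<ge> 0" for i using z_le by simp
next
  fix w :: "int^'n"
  assume w: "(\<forall>i. w $ i \<ge> 0) \<and> w \<noteq> 0"
  then obtain i where "w $ i > 0" by (metis order_neq_le_trans vec_eq_iff zero_index)
  moreover have "w $ i \<le> sum (($) w) UNIV" by (rule member_le_sum) (use w in auto)
  ultimately have "sum (($) (z + w)) UNIV > sum (($) z) UNIV" by (simp add: sum.distrib)
  with max[of "z + w"] z_nonneg w
  have "\<exists>i. (L *v (z + w)) $ i > f $ i" by (fastforce simp: not_le)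
  then show "\<exists>i. (f - L *v z) $ i - (L *v w) $ i < 0"
    by (fastforce simp: matrix_vector_right_distrib algebra_simps)
qed

lemma exists_z_superstable_lat_equiv:
  fixes L :: "int^'n^'n"
  assumes "nonsingular_M_matrix L"
  shows "\<exists>f. lat_equiv L g f \<and> z_superstable L f"
proof -
  have inv: "invertible (real_mat L)" and inv_nonneg: "\<forall>i j. matrix_inv (real_mat L) $ i $ j \<ge> 0"
    using assms unfolding nonsingular_M_matrix_def by auto
  obtain f0 where f0: "lat_equiv L g f0" "\<forall>i. f0 $ i \<ge> 0"
    using exists_nonneg_lat_equiv[OF inv] by blast
  define feasible where "feasible z \<longleftrightarrow> (\<forall>i. z $ i \<ge> 0) \<and> (\<forall>i. (L *v z) $ i \<le> f0 $ i)" for z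
  define B where "B = (\<Sum>i\<in>UNIV. (matrix_inv (real_mat L) *v real_vec f0) $ i)"
  have bounded: "nat (sum (($) z) UNIV) < nat \<lceil>B\<rceil> + 1" if "feasible z" for z
  proof -
    have "real_of_int (sum (($) z) UNIV) \<le> B"
      using real_le_inverse_mult_if_mult_le[OF inv inv_nonneg] that
      unfolding B_def feasible_def by (simp add: sum_mono)
    then show ?thesis by linarith
  qed
  have "feasible 0" using f0 by (simp add: feasible_def)
  then obtain z where z: "feasible z"
    and max_nat: "\<And>z'. feasible z' \<Longrightarrow> nat (sum (($) z') UNIV) \<le> nat (sum (($) z) UNIV)"
    using ex_has_greatest_nat[of feasible 0 "\<lambda>z. nat (sum (($) z) UNIV)"] bounded by blast
  have sum_nonneg_feasible: "sum (($) z') UNIV \<ge> 0" if "feasible z'" for z'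
    using that unfolding feasible_def by (auto intro: sum_nonneg)
  have "sum (($) z') UNIV \<le> sum (($) z) UNIV" if "feasible z'" for z'
    using max_nat[OF that] sum_nonneg_feasible[OF that] sum_nonneg_feasible[OF z] by linarith
  then have "z_superstable L (f0 - L *v z)"
    using z unfolding feasible_def by (intro z_superstable_if_max_sum) auto
  moreover have "lat_equiv L g (f0 - L *v z)"
    using f0(1) lat_equiv_diff_image by (rule lat_equiv_trans)
  ultimately show ?thesis by blast
qed

theorem mainTheorem6:
  fixes L :: "int^'n^'n"
  assumes "nonsingular_M_matrix L"
  shows "\<forall>g::int^'n. \<exists>!f. lat_equiv L g f \<and> z_superstable L f"
proof
  fix g :: "int^'n"
  have Z: "Z_matrix L" using assms unfolding nonsingular_M_matrix_def by blast
  show "\<exists>!f. lat_equiv L g f \<and> z_superstable L f"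
    using exists_z_superstable_lat_equiv[OF assms]
      z_superstable_unique[OF Z] lat_equiv_sym lat_equiv_trans by metis
qed

end
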